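(* Let $f:\mathbb{R}^n\to\mathbb{R}^n$ and let $x^*\in\mathbb{R}^n$ satisfy $f(x^* )=0$. Assume $f$ is continuously differentiable in a neighborhood $B_1(x^* )$ of $x^*$ and that the Jacobian $J_f(x^* )$ is nonsingular. Consider a nonlinear Krylov (nlKrylov) iteration as described in the context, generating iterates $x_{j+1}=x_j+P_jy_j$ with $y_j=-V_j^Tf(x_j)$, where $V_j^TV_j=I_{n_j}$. Define $W_j=J_f(x_j)P_j-V_j$, $$\mu_j=\frac{\|W_jy_j\|}{\|f(x_j)\|},\qquad \eta_j=\frac{\|f(x_j)+V_jy_j\|}{\|f(x_j)\|},$$ and suppose there is a constant $c$ with $0<c<1$ such that for all $j$, $$c_j:=\mu_j+\eta_j\le c<1.$$ Then there exists a neighborhood $B_0(x^* )$ of $x^*$ such that for every initial guess $x_0\in B_0(x^* )$ the nlKrylov iterates $\{x_j\}_j$ converge to $x^*$.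
   Context: Norms are Euclidean 2-norms and $J_f(x)$ denotes the Jacobian of $f$ at $x$. An nlKrylov method solves $f(x)=0$ as follows: at iteration $j$ it holds two matrices $P_j,V_j\in\mathbb{R}^{n\times n_j}$ (search directions and approximations of $J_f(x_j)P_j$, respectively, built from previous iterates, Jacobian-vector products and an inner linear solver applied to $J_f(x_j)\hat p=-f(x_j)$), where the columns of $V_j$ are orthonormal, i.e. $V_j^TV_j=I_{n_j}$. With residual $r_j=-f(x_j)$, the method sets $y_j=V_j^Tr_j=-V_j^Tf(x_j)$ and updates $x_{j+1}=x_j+P_jy_j$. The matrix $W_j=J_f(x_j)P_j-V_j$ measures the mismatch between $V_j$ and $J_f(x_j)P_j$. *)

theory Defs
  imports "HOL-Analysis.Analysis"
begin

definition jacobian :: "(real^'n \<Rightarrow> real^'m) \<Rightarrow> real^'n \<Rightarrow> real^'n^'m" where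
  "jacobian f x = matrix (frechet_derivative f (at x))"

text \<open>An n x k matrix is represented by its k columns A 0, ..., A (k-1).
  colmul A k y is the matrix-vector product A y (y in R^k, entries y 0 .. y (k-1)),
  coltrans A k v is the vector A^T v in R^k (entries beyond k set to 0).\<close>
definition colmul :: "(nat \<Rightarrow> real^'n) \<Rightarrow> nat \<Rightarrow> (nat \<Rightarrow> real) \<Rightarrow> real^'n" where
  "colmul A k y = (\<Sum>i<k. y i *\<^sub>R A i)"

definition coltrans :: "(nat \<Rightarrow> real^'n) \<Rightarrow> nat \<Rightarrow> real^'n \<Rightarrow> (nat \<Rightarrow> real)" where
  "coltrans A k v = (\<lambda>i. if i < k then A i \<bullet> v else 0)"

definition orthonormal_cols :: "(nat \<Rightarrow> real^'n) \<Rightarrow> nat \<Rightarrow> bool" where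
  "orthonormal_cols A k \<longleftrightarrow> (\<forall>i<k. \<forall>l<k. A i \<bullet> A l = (if i = l then 1 else 0))"

end

theory Submission
  imports Defs
begin

text \<open>Measure the error \<open>e = x - x\<^sup>*\<close> by \<open>\<parallel>A e\<parallel>\<close> with \<open>A = J\<^sub>f(x\<^sup>*)\<close>.
  Since \<open>f(x\<^sub>j) + J\<^sub>f(x\<^sub>j) P\<^sub>j y\<^sub>j = (f(x\<^sub>j) + V\<^sub>j y\<^sub>j) + W\<^sub>j y\<^sub>j\<close>, the condition
  \<open>\<mu>\<^sub>j + \<eta>\<^sub>j \<le> c\<close> makes every nlKrylov step an inexact Newton step with forcing term \<open>c\<close>.
  Near \<open>x\<^sup>*\<close> we have \<open>f(x) \<approx> A e\<close> and \<open>J\<^sub>f(x) \<approx> A\<close>, so such a step multiplies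
  \<open>\<parallel>A e\<parallel>\<close> by at most \<open>(1 + c) / 2 < 1\<close>; iterates starting close enough never leave
  this neighbourhood and converge geometrically.\<close>

lemma norm_matrix_vector_mult_le:
  fixes M :: "real^'n^'m"
  shows "norm (M *v v) \<le> real CARD('m) * norm M * norm v"
proof -
  have "norm (M *v v) \<le> (\<Sum>i\<in>UNIV. \<bar>(M *v v) $ i\<bar>)"
    by (rule norm_le_l1_cart)
  also have "\<dots> \<le> (\<Sum>i\<in>(UNIV::'m set). norm M * norm v)"
  proof (rule sum_mono)
    fix i
    have "\<bar>(M *v v) $ i\<bar> \<le> norm (M $ i) * norm v"
      by (simp add: matrix_mult_dot Cauchy_Schwarz_ineq2)
    also have "\<dots> \<le> norm M * norm v"
      by (rule mult_right_mono[OF Finite_Cartesian_Product.norm_nth_le norm_ge_zero])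
    finally show "\<bar>(M *v v) $ i\<bar> \<le> norm M * norm v" .
  qed
  finally show ?thesis
    by simp
qed

lemma invertible_matrix_bounded_below:
  fixes A :: "real^'n^'n"
  assumes "invertible A"
  obtains K where "K > 0" "\<And>v. norm v \<le> K * norm (A *v v)"
proof -
  obtain B where B: "B ** A = mat 1"
    using assms unfolding invertible_def by auto
  have "norm v \<le> (real CARD('n) * norm B + 1) * norm (A *v v)" for v
  proof -
    have "norm v = norm (B *v (A *v v))"
      by (simp add: matrix_vector_mul_assoc B)
    also have "\<dots> \<le> real CARD('n) * norm B * norm (A *v v)"
      by (rule norm_matrix_vector_mult_le)
    also have "\<dots> \<le> (real CARD('n) * norm B + 1) * norm (A *v v)"
      by (simp add: distrib_right)
    finally show ?thesis .
  qed
  moreover have "real CARD('n) * norm B + 1 > 0"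
    by (simp add: add_nonneg_pos)
  ultimately show thesis
    using that by blast
qed

lemma has_derivative_jacobian:
  "f differentiable (at x) \<Longrightarrow> (f has_derivative (\<lambda>h. jacobian f x *v h)) (at x)"
  using jacobian_works unfolding jacobian_def Cartesian_Euclidean_Space.jacobian_def by blast

lemma eventually_first_order_approx:
  assumes "f differentiable (at x)" and "\<gamma> > 0"
  shows "\<forall>\<^sub>F y in nhds x. norm (f y - f x - jacobian f x *v (y - x)) \<le> \<gamma> * norm (y - x)"
proof -
  obtain \<rho> where "\<rho> > 0"
    and "\<And>y. norm (y - x) < \<rho> \<Longrightarrow> norm (f y - f x - jacobian f x *v (y - x)) \<le> \<gamma> * norm (y - x)"
    using has_derivative_jacobian[OF assms(1)] assms(2) unfolding has_derivative_at_alt by blast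
  then show ?thesis
    unfolding eventually_nhds_metric dist_norm by blast
qed

lemma eventually_matrix_close:
  fixes M :: "'a::metric_space \<Rightarrow> real^'n^'m"
  assumes "isCont M x" and "\<gamma> > 0"
  shows "\<forall>\<^sub>F y in nhds x. \<forall>v. norm ((M x - M y) *v v) \<le> \<gamma> * norm v"
proof -
  have "\<forall>\<^sub>F y in nhds x. dist (M y) (M x) < \<gamma> / real CARD('m)"
    using assms by (simp add: continuous_at_eps_delta eventually_nhds_metric)
  then show ?thesis
  proof (rule eventually_mono, intro allI)
    fix y and v :: "real^'n"
    assume "dist (M y) (M x) < \<gamma> / real CARD('m)"
    then have "real CARD('m) * norm (M x - M y) \<le> \<gamma>"
      by (simp add: dist_norm norm_minus_commute field_simps)
    then have "real CARD('m) * norm (M x - M y) * norm v \<le> \<gamma> * norm v"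
      by (simp add: mult_right_mono)
    then show "norm ((M x - M y) *v v) \<le> \<gamma> * norm v"
      using norm_matrix_vector_mult_le[of "M x - M y" v] by linarith
  qed
qed

lemma inexact_newton_step_norm_le:
  fixes A J :: "real^'n^'n" and F s :: "real^'n"
  assumes "K \<ge> 0" and bounded_below: "\<And>v. norm v \<le> K * norm (A *v v)"
    and close: "\<And>v. norm ((A - J) *v v) \<le> \<gamma> * norm v" and small: "K * \<gamma> \<le> 1/2"
    and "c \<le> 1" and residual: "norm (F + J *v s) \<le> c * norm F"
  shows "norm s \<le> 4 * K * norm F"
proof -
  have "norm (J *v s) \<le> norm (F + J *v s) + norm F"
    using norm_triangle_ineq4[of "F + J *v s" F] by simp
  also have "\<dots> \<le> 2 * norm F"
    using residual mult_right_mono[OF \<open>c \<le> 1\<close> norm_ge_zero[of F]] by simp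
  finally have "norm (J *v s) \<le> 2 * norm F" .
  moreover have "norm (A *v s) \<le> norm (J *v s) + norm ((A - J) *v s)"
    using norm_triangle_ineq[of "J *v s" "(A - J) *v s"]
    by (simp add: matrix_vector_mult_diff_rdistrib)
  ultimately have "norm (A *v s) \<le> 2 * norm F + \<gamma> * norm s"
    using close[of s] by linarith
  from mult_left_mono[OF this \<open>K \<ge> 0\<close>]
  have "norm s \<le> 2 * K * norm F + K * \<gamma> * norm s"
    using bounded_below[of s] by (simp add: algebra_simps)
  moreover have "K * \<gamma> * norm s \<le> 1/2 * norm s"
    using mult_right_mono[OF small norm_ge_zero[of s]] by simp
  ultimately show ?thesis
    by linarith
qed

lemma inexact_newton_step_contracts:
  fixes A J :: "real^'n^'n" and F e s :: "real^'n"
  assumes "K \<ge> 0" "\<gamma> \<ge> 0" and bounded_below: "\<And>v. norm v \<le> K * norm (A *v v)"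
    and approx: "norm (F - A *v e) \<le> \<gamma> * norm e"
    and close: "\<And>v. norm ((A - J) *v v) \<le> \<gamma> * norm v" and small: "K * \<gamma> \<le> 1/2"
    and "0 \<le> c" "c \<le> 1" and residual: "norm (F + J *v s) \<le> c * norm F"
  shows "norm (A *v (e + s)) \<le> (c + 8 * (K * \<gamma>)) * norm (A *v e)"
proof -
  define \<epsilon> a where "\<epsilon> = K * \<gamma>" and "a = norm (A *v e)"
  have "\<epsilon> \<ge> 0" "a \<ge> 0"
    using \<open>K \<ge> 0\<close> \<open>\<gamma> \<ge> 0\<close> by (simp_all add: \<epsilon>_def a_def)
  have approx_weighted: "norm (F - A *v e) \<le> \<epsilon> * a"
    using approx mult_left_mono[OF bounded_below[of e] \<open>\<gamma> \<ge> 0\<close>]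
    by (simp add: \<epsilon>_def a_def mult_ac)
  have "norm F \<le> norm (F - A *v e) + a"
    using norm_triangle_ineq[of "F - A *v e" "A *v e"] by (simp add: a_def)
  then have F: "norm F \<le> (1 + \<epsilon>) * a"
    using approx_weighted by (simp add: distrib_right)
  have "\<gamma> * norm s \<le> \<gamma> * (4 * K * norm F)"
    using inexact_newton_step_norm_le[OF \<open>K \<ge> 0\<close> bounded_below close small \<open>c \<le> 1\<close> residual] \<open>\<gamma> \<ge> 0\<close>
    by (rule mult_left_mono)
  then have step: "\<gamma> * norm s \<le> 4 * \<epsilon> * ((1 + \<epsilon>) * a)"
    using mult_left_mono[OF F, of "4 * \<epsilon>"] \<open>\<epsilon> \<ge> 0\<close> by (simp add: \<epsilon>_def mult_ac)
  have "A *v (e + s) = (F + J *v s) - (F - A *v e) + (A - J) *v s"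
    by (simp add: matrix_vector_right_distrib matrix_vector_mult_diff_rdistrib)
  then have "norm (A *v (e + s)) \<le> norm (F + J *v s) + norm (F - A *v e) + norm ((A - J) *v s)"
    using norm_triangle_ineq[of "(F + J *v s) - (F - A *v e)" "(A - J) *v s"]
      norm_triangle_ineq4[of "F + J *v s" "F - A *v e"] by simp
  also have "\<dots> \<le> c * ((1 + \<epsilon>) * a) + \<epsilon> * a + 4 * \<epsilon> * ((1 + \<epsilon>) * a)"
    using residual mult_left_mono[OF F \<open>0 \<le> c\<close>] approx_weighted close[of s] step by linarith
  also have "\<dots> \<le> (c + 8 * \<epsilon>) * a"
  proof -
    have "c * \<epsilon> \<le> \<epsilon>" "\<epsilon> * \<epsilon> \<le> \<epsilon> / 2"
      using mult_right_mono[OF \<open>c \<le> 1\<close> \<open>\<epsilon> \<ge> 0\<close>] mult_right_mono[OF small \<open>\<epsilon> \<ge> 0\<close>]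
      by (simp_all add: \<epsilon>_def)
    then have "c * (1 + \<epsilon>) + \<epsilon> + 4 * \<epsilon> * (1 + \<epsilon>) \<le> c + 8 * \<epsilon>"
      by (simp add: algebra_simps)
    from mult_right_mono[OF this \<open>a \<ge> 0\<close>] show ?thesis
      by (simp add: algebra_simps)
  qed
  finally show ?thesis
    by (simp add: \<epsilon>_def a_def)
qed

lemma eventually_inexact_newton_step_contracts:
  fixes f :: "real^'n \<Rightarrow> real^'n"
  assumes root: "f xs = 0" and "f differentiable (at xs)" and "isCont (jacobian f) xs"
    and "K > 0" and bounded_below: "\<And>v. norm v \<le> K * norm (jacobian f xs *v v)"
    and "0 \<le> c" "c < 1"
  shows "\<forall>\<^sub>F y in nhds xs. \<forall>s. norm (f y + jacobian f y *v s) \<le> c * norm (f y) \<longrightarrow>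
           norm (jacobian f xs *v (y + s - xs)) \<le> (1 + c) / 2 * norm (jacobian f xs *v (y - xs))"
proof -
  define \<gamma> where "\<gamma> = min (1/2) ((1 - c) / 16) / K"
  have "\<gamma> > 0"
    using \<open>c < 1\<close> \<open>K > 0\<close> by (simp add: \<gamma>_def)
  have K\<gamma>: "K * \<gamma> = min (1/2) ((1 - c) / 16)"
    using \<open>K > 0\<close> by (simp add: \<gamma>_def)
  have "\<forall>\<^sub>F y in nhds xs. norm (f y - jacobian f xs *v (y - xs)) \<le> \<gamma> * norm (y - xs)
      \<and> (\<forall>v. norm ((jacobian f xs - jacobian f y) *v v) \<le> \<gamma> * norm v)"
    using eventually_conj[OF eventually_first_order_approx[OF assms(2) \<open>\<gamma> > 0\<close>]
        eventually_matrix_close[OF assms(3) \<open>\<gamma> > 0\<close>]]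
    by (simp add: root)
  then show ?thesis
  proof (rule eventually_mono, intro allI impI)
    fix y s
    assume "norm (f y - jacobian f xs *v (y - xs)) \<le> \<gamma> * norm (y - xs)
      \<and> (\<forall>v. norm ((jacobian f xs - jacobian f y) *v v) \<le> \<gamma> * norm v)"
      and residual: "norm (f y + jacobian f y *v s) \<le> c * norm (f y)"
    then have approx: "norm (f y - jacobian f xs *v (y - xs)) \<le> \<gamma> * norm (y - xs)"
      and close: "\<And>v. norm ((jacobian f xs - jacobian f y) *v v) \<le> \<gamma> * norm v"
      by blast+
    have "K * \<gamma> \<le> 1/2"
      unfolding K\<gamma> by linarith
    from inexact_newton_step_contracts[OF _ _ bounded_below approx close this \<open>0 \<le> c\<close> _ residual]
    have "norm (jacobian f xs *v (y - xs + s)) \<le> (c + 8 * (K * \<gamma>)) * norm (jacobian f xs *v (y - xs))"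
      using \<open>K > 0\<close> \<open>\<gamma> > 0\<close> \<open>c < 1\<close> by simp
    also have "\<dots> \<le> (1 + c) / 2 * norm (jacobian f xs *v (y - xs))"
      using min.cobounded2[of "1/2" "(1 - c) / 16"] unfolding K\<gamma>
      by (intro mult_right_mono) simp_all
    finally show "norm (jacobian f xs *v (y + s - xs)) \<le> (1 + c) / 2 * norm (jacobian f xs *v (y - xs))"
      by (simp add: diff_add_eq)
  qed
qed

lemma tendsto_zero_of_contraction_while_close:
  fixes e :: "nat \<Rightarrow> 'a::real_normed_vector" and g :: "'a \<Rightarrow> real"
  assumes "K > 0" and bounded_below: "\<And>v. norm v \<le> K * g v" and "0 \<le> t" "t < 1"
    and start: "K * g (e 0) < \<rho>"
    and contracts: "\<And>j. norm (e j) < \<rho> \<Longrightarrow> g (e (Suc j)) \<le> t * g (e j)"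
  shows "e \<longlonglongrightarrow> 0"
proof -
  have g_nonneg: "g v \<ge> 0" for v
  proof -
    have "0 \<le> K * g v"
      using order_trans[OF norm_ge_zero bounded_below] .
    with \<open>K > 0\<close> show ?thesis
      by (simp add: zero_le_mult_iff)
  qed
  have decay: "g (e j) \<le> t ^ j * g (e 0)" for j
  proof (induction j)
    case 0
    show ?case by simp
  next
    case (Suc j)
    have "norm (e j) \<le> K * g (e j)"
      by (rule bounded_below)
    also have "\<dots> \<le> K * g (e 0)"
    proof -
      have "t ^ j * g (e 0) \<le> g (e 0)"
        using \<open>0 \<le> t\<close> \<open>t < 1\<close> by (intro mult_left_le_one_le g_nonneg zero_le_power power_le_one) auto
      with Suc.IH \<open>K > 0\<close> show ?thesis
        by (intro mult_left_mono) auto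
    qed
    also have "\<dots> < \<rho>"
      by (rule start)
    finally have "norm (e j) < \<rho>" .
    then have "g (e (Suc j)) \<le> t * g (e j)"
      by (rule contracts)
    also have "\<dots> \<le> t ^ Suc j * g (e 0)"
      using mult_left_mono[OF Suc.IH \<open>0 \<le> t\<close>] by simp
    finally show ?case .
  qed
  have bound: "norm (e j) \<le> K * g (e 0) * t ^ j" for j
    using bounded_below[of "e j"] mult_left_mono[OF decay[of j] less_imp_le[OF \<open>K > 0\<close>]]
    by (simp add: mult_ac)
  have geometric: "(\<lambda>j. K * g (e 0) * t ^ j) \<longlonglongrightarrow> 0"
    using \<open>0 \<le> t\<close> \<open>t < 1\<close> by (intro tendsto_mult_right_zero LIMSEQ_power_zero) simp
  show ?thesis
    by (rule Lim_null_comparison[OF always_eventually geometric]) (use bound in blast)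
qed

lemma inexact_newton_local_convergence:
  fixes f :: "real^'n \<Rightarrow> real^'n"
  assumes root: "f xs = 0" and "f differentiable (at xs)" and "isCont (jacobian f) xs"
    and "invertible (jacobian f xs)" and "0 \<le> c" "c < 1"
  shows "\<exists>\<delta>>0. \<forall>x. x 0 \<in> ball xs \<delta> \<and>
      (\<forall>j. \<exists>s. x (Suc j) = x j + s \<and> norm (f (x j) + jacobian f (x j) *v s) \<le> c * norm (f (x j)))
      \<longrightarrow> x \<longlonglongrightarrow> xs"
proof -
  define A where "A = jacobian f xs"
  obtain K where "K > 0" and bounded_below: "\<And>v. norm v \<le> K * norm (A *v v)"
    using invertible_matrix_bounded_below assms(4) unfolding A_def by blast
  obtain \<rho> where "\<rho> > 0" and contracts: "\<And>y s. dist y xs < \<rho> \<Longrightarrow>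
      norm (f y + jacobian f y *v s) \<le> c * norm (f y) \<Longrightarrow>
      norm (A *v (y + s - xs)) \<le> (1 + c) / 2 * norm (A *v (y - xs))"
    using eventually_inexact_newton_step_contracts[OF assms(1-3) \<open>K > 0\<close> _ assms(5,6)]
      bounded_below unfolding A_def eventually_nhds_metric by blast
  define L where "L = K * (real CARD('n) * norm A)"
  have "L \<ge> 0"
    using \<open>K > 0\<close> by (simp add: L_def)
  define \<delta> where "\<delta> = \<rho> / (L + 1)"
  have "\<delta> > 0"
    using \<open>\<rho> > 0\<close> \<open>L \<ge> 0\<close> by (simp add: \<delta>_def)
  show ?thesis
  proof (intro exI[of _ \<delta>] conjI allI impI \<open>\<delta> > 0\<close>)
    fix x :: "nat \<Rightarrow> real^'n"
    assume iteration: "x 0 \<in> ball xs \<delta> \<and>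
      (\<forall>j. \<exists>s. x (Suc j) = x j + s \<and> norm (f (x j) + jacobian f (x j) *v s) \<le> c * norm (f (x j)))"
    have "K * norm (A *v (x 0 - xs)) \<le> L * norm (x 0 - xs)"
      using mult_left_mono[OF norm_matrix_vector_mult_le[of A "x 0 - xs"] less_imp_le[OF \<open>K > 0\<close>]]
      by (simp add: L_def mult_ac)
    also have "\<dots> \<le> L * \<delta>"
      using iteration \<open>L \<ge> 0\<close> by (intro mult_left_mono) (auto simp: dist_norm norm_minus_commute)
    also have "\<dots> < \<rho>"
      using \<open>\<delta> > 0\<close> \<open>L \<ge> 0\<close> by (simp add: \<delta>_def field_simps)
    finally have start: "K * norm (A *v (x 0 - xs)) < \<rho>" .
    have "(\<lambda>j. x j - xs) \<longlonglongrightarrow> 0"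
    proof (rule tendsto_zero_of_contraction_while_close[where g = "\<lambda>v. norm (A *v v)"
          and e = "\<lambda>j. x j - xs" and t = "(1 + c) / 2", OF \<open>K > 0\<close> bounded_below _ _ start])
      fix j
      assume "norm (x j - xs) < \<rho>"
      moreover obtain s where "x (Suc j) = x j + s" "norm (f (x j) + jacobian f (x j) *v s) \<le> c * norm (f (x j))"
        using iteration by blast
      ultimately show "norm (A *v (x (Suc j) - xs)) \<le> (1 + c) / 2 * norm (A *v (x j - xs))"
        using contracts[of "x j" s] by (simp add: dist_norm)
    qed (use \<open>0 \<le> c\<close> \<open>c < 1\<close> in auto)
    then show "x \<longlonglongrightarrow> xs"
      by (simp add: LIM_zero_iff)
  qed
qed

text \<open>If \<open>F = 0\<close>, the quotients in the hypothesis are \<open>0\<close> since \<open>x / 0 = 0\<close>;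
  the conclusion still holds because then \<open>y = 0\<close>.\<close>
lemma nlkrylov_step_is_inexact_newton_step:
  fixes J :: "real^'n^'n" and F x x' :: "real^'n" and P V :: "nat \<Rightarrow> real^'n" and k :: nat
  defines "y \<equiv> coltrans V k (- F)"
  assumes "x' = x + colmul P k y"
    and "norm (J *v colmul P k y - colmul V k y) / norm F + norm (F + colmul V k y) / norm F \<le> c"
  shows "\<exists>s. x' = x + s \<and> norm (F + J *v s) \<le> c * norm F"
proof (intro exI conjI)
  show "x' = x + colmul P k y"
    by fact
  show "norm (F + J *v colmul P k y) \<le> c * norm F"
  proof (cases "F = 0")
    case True
    then have "y = (\<lambda>i. 0)"
      by (auto simp: y_def coltrans_def)
    then show ?thesis
      by (simp add: True colmul_def)
  next
    case False
    have "norm (F + J *v colmul P k y)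
        \<le> norm (J *v colmul P k y - colmul V k y) + norm (F + colmul V k y)"
      using norm_triangle_ineq[of "J *v colmul P k y - colmul V k y" "F + colmul V k y"]
      by (simp add: algebra_simps)
    also have "\<dots> \<le> c * norm F"
      using assms(3) False by (simp add: add_divide_distrib[symmetric] divide_le_eq)
    finally show ?thesis .
  qed
qed

theorem theorem5p1:
  fixes f :: "real^'n \<Rightarrow> real^'n" and xs :: "real^'n" and r c :: real
  assumes root: "f xs = 0"
    and r_pos: "r > 0"
    and diff: "\<forall>x\<in>ball xs r. f differentiable (at x)"
    and cont: "continuous_on (ball xs r) (jacobian f)"
    and nonsing: "invertible (jacobian f xs)"
    and c_pos: "0 < c" and c_lt: "c < 1"
  shows "\<exists>\<delta>>0. \<forall>(x :: nat \<Rightarrow> real^'n) (P :: nat \<Rightarrow> nat \<Rightarrow> real^'n)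
                 (V :: nat \<Rightarrow> nat \<Rightarrow> real^'n) (m :: nat \<Rightarrow> nat).
      x 0 \<in> ball xs \<delta> \<and>
      (\<forall>j. let y = coltrans (V j) (m j) (- f (x j)) in
             orthonormal_cols (V j) (m j) \<and>
             x (Suc j) = x j + colmul (P j) (m j) y \<and>
             norm (jacobian f (x j) *v colmul (P j) (m j) y - colmul (V j) (m j) y) / norm (f (x j))
             + norm (f (x j) + colmul (V j) (m j) y) / norm (f (x j)) \<le> c)
      \<longrightarrow> x \<longlonglongrightarrow> xs"
proof -
  have "xs \<in> ball xs r"
    using r_pos by simp
  then have "f differentiable (at xs)" and "isCont (jacobian f) xs"
    using diff cont by (auto simp: continuous_on_eq_continuous_at)
  from inexact_newton_local_convergence[OF root this nonsing less_imp_le[OF c_pos] c_lt]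
  obtain \<delta> where "\<delta> > 0" and converges: "\<forall>x. x 0 \<in> ball xs \<delta> \<and>
      (\<forall>j. \<exists>s. x (Suc j) = x j + s \<and> norm (f (x j) + jacobian f (x j) *v s) \<le> c * norm (f (x j)))
      \<longrightarrow> x \<longlonglongrightarrow> xs"
    by blast
  show ?thesis
    using \<open>\<delta> > 0\<close> converges nlkrylov_step_is_inexact_newton_step unfolding Let_def by blast
qed

end
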